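(* Let $R$ be a ring and let $A=\sigma(R)\langle x_1,\dots,x_n\rangle$ be a skew PBW extension of $R$ with associated families $\Sigma,\Delta$. Suppose $R$ is $(\Sigma,\Delta)$-compatible, Abelian, NI, and satisfies condition (SA1). If $R$ is a right (resp. left) p.p.-ring, then $A$ has Property $(a.c.)$ on the right (resp. left).
   Context: All rings are associative with identity. For $S\subseteq T$ (a ring $T$), $r_T(S)=\{a\in T: Sa=0\}$ and $\ell_T(S)=\{a\in T: aS=0\}$. A ring $A$ is a skew PBW extension of $R$, written $A=\sigma(R)\langle x_1,\dots,x_n\rangle$, if: (i) $R$ is a subring of $A$ with the same identity; (ii) there are elements $x_1,\dots,x_n\in A$ such that $A$ is a free left $R$-module with basis the standard monomials $x^\alpha=x_1^{\alpha_1}\cdots x_n^{\alpha_n}$, $\alpha\in\mathbb N^n$ (with $x^0=1$); (iii) for each $i$ and each nonzero $r\in R$ there is nonzero $c_{i,r}\in R$ with $x_ir-c_{i,r}x_i\in R$; (iv) for all $i,j$ there is nonzero $d_{i,j}\in R$ with $x_jx_i-d_{i,j}x_ix_j\in R+Rx_1+\cdots+Rx_n$. For such $A$ there are injective endomorphisms $\sigma_i$ of $R$ and $\sigma_i$-derivations $\delta_i$ of $R$ with $x_ir=\sigma_i(r)x_i+\delta_i(r)$ for all $r\in R$; $\Sigma=\{\sigma_1,\dots,\sigma_n\}$, $\Delta=\{\delta_1,\dots,\delta_n\}$. For $\alpha\in\mathbb N^n$, $\sigma^\alpha=\sigma_1^{\alpha_1}\circ\cdots\circ\sigma_n^{\alpha_n}$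 and $\delta^\alpha=\delta_1^{\alpha_1}\circ\cdots\circ\delta_n^{\alpha_n}$. $R$ is $\Sigma$-compatible if for all $a,b\in R$ and $\alpha\in\mathbb N^n$: $a\sigma^\alpha(b)=0$ iff $ab=0$; $R$ is $\Delta$-compatible if for all $a,b\in R$ and $\beta\in\mathbb N^n$: $ab=0$ implies $a\delta^\beta(b)=0$; $(\Sigma,\Delta)$-compatible means both. $R$ satisfies condition (SA1) if whenever $fg=0$ for $f=a_0+a_1X_1+\cdots+a_mX_m$ and $g=b_0+b_1Y_1+\cdots+b_tY_t$ in $A$ (with $a_i,b_j\in R$ and $X_i,Y_j$ standard monomials), then $a_ib_j=0$ for all $i,j$. $R$ is Abelian if every idempotent of $R$ is central. $R$ is NI if the upper nilradical $\mathrm{nil}^*(R)$ (sum of all nil ideals) equals the set $\mathrm{nil}(R)$ of nilpotent elements. $R$ is a right (resp. left) p.p.-ring if for each $a\in R$ there is an idempotent $e$ with $r_R(a)=eR$ (resp. $\ell_R(a)=Re$). A ring $T$ has Property $(a.c.)$ on the right if for every finitely generated right ideal $I$ of $T$ there is $c\in T$ with $r_T(I)=r_T(cT)$; on the left if for every finitely generated left ideal $I$ there is $c\in T$ with $\ell_T(I)=\ell_T(Tc)$. *)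

theory Defs
  imports Main
begin

text \<open>The ambient ring A is the whole type 'a (a ring with identity); R is a subset of it.
Indices of the variables are 0..n-1 (standing for x_1..x_n).\<close>

definition subring_of :: "'a::ring_1 set \<Rightarrow> bool" where
  "subring_of R \<longleftrightarrow> 1 \<in> R \<and> 0 \<in> R \<and> (\<forall>a\<in>R. \<forall>b\<in>R. a + b \<in> R \<and> a * b \<in> R \<and> - a \<in> R)"

definition exps :: "nat \<Rightarrow> (nat \<Rightarrow> nat) set" where
  "exps n = {\<alpha>. \<forall>i\<ge>n. \<alpha> i = 0}"

fun std_mono :: "(nat \<Rightarrow> 'a::ring_1) \<Rightarrow> nat \<Rightarrow> (nat \<Rightarrow> nat) \<Rightarrow> 'a" where
  "std_mono x 0 \<alpha> = 1"
| "std_mono x (Suc k) \<alpha> = std_mono x k \<alpha> * x k ^ \<alpha> k"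

fun comp_pow :: "(nat \<Rightarrow> 'b \<Rightarrow> 'b) \<Rightarrow> nat \<Rightarrow> (nat \<Rightarrow> nat) \<Rightarrow> 'b \<Rightarrow> 'b" where
  "comp_pow f 0 \<alpha> = id"
| "comp_pow f (Suc k) \<alpha> = comp_pow f k \<alpha> \<circ> (f k ^^ \<alpha> k)"

definition lin_comb :: "(nat \<Rightarrow> 'a::ring_1) \<Rightarrow> nat \<Rightarrow> (nat \<Rightarrow> nat) set \<Rightarrow> ((nat \<Rightarrow> nat) \<Rightarrow> 'a) \<Rightarrow> 'a" where
  "lin_comb x n S c = (\<Sum>\<alpha>\<in>S. c \<alpha> * std_mono x n \<alpha>)"

definition skew_PBW :: "'a::ring_1 set \<Rightarrow> nat \<Rightarrow> (nat \<Rightarrow> 'a) \<Rightarrow> bool" where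
  "skew_PBW R n x \<longleftrightarrow>
     subring_of R
   \<and> (\<forall>f::'a. \<exists>S c. finite S \<and> S \<subseteq> exps n \<and> (\<forall>\<alpha>\<in>S. c \<alpha> \<in> R) \<and> f = lin_comb x n S c)
   \<and> (\<forall>S c. finite S \<and> S \<subseteq> exps n \<and> (\<forall>\<alpha>\<in>S. c \<alpha> \<in> R) \<and> lin_comb x n S c = 0
            \<longrightarrow> (\<forall>\<alpha>\<in>S. c \<alpha> = 0))
   \<and> (\<forall>i<n. \<forall>r\<in>R. r \<noteq> 0 \<longrightarrow> (\<exists>c\<in>R. c \<noteq> 0 \<and> x i * r - c * x i \<in> R))
   \<and> (\<forall>i<n. \<forall>j<n. \<exists>d\<in>R. d \<noteq> 0 \<and>
        (\<exists>r0\<in>R. \<exists>r. (\<forall>k<n. r k \<in> R) \<and>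
            x j * x i - d * x i * x j = r0 + (\<Sum>k<n. r k * x k)))"

text \<open>sigma, delta are the (uniquely determined) maps with x_i r = sigma_i(r) x_i + delta_i(r).\<close>
definition PBW_maps :: "'a::ring_1 set \<Rightarrow> nat \<Rightarrow> (nat \<Rightarrow> 'a) \<Rightarrow> (nat \<Rightarrow> 'a \<Rightarrow> 'a) \<Rightarrow> (nat \<Rightarrow> 'a \<Rightarrow> 'a) \<Rightarrow> bool" where
  "PBW_maps R n x \<sigma> \<delta> \<longleftrightarrow>
     (\<forall>i<n. \<forall>r\<in>R. \<sigma> i r \<in> R \<and> \<delta> i r \<in> R \<and> x i * r = \<sigma> i r * x i + \<delta> i r)"

definition Sigma_compatible :: "'a::ring_1 set \<Rightarrow> nat \<Rightarrow> (nat \<Rightarrow> 'a \<Rightarrow> 'a) \<Rightarrow> bool" where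
  "Sigma_compatible R n \<sigma> \<longleftrightarrow>
     (\<forall>a\<in>R. \<forall>b\<in>R. \<forall>\<alpha>. a * comp_pow \<sigma> n \<alpha> b = 0 \<longleftrightarrow> a * b = 0)"

definition Delta_compatible :: "'a::ring_1 set \<Rightarrow> nat \<Rightarrow> (nat \<Rightarrow> 'a \<Rightarrow> 'a) \<Rightarrow> bool" where
  "Delta_compatible R n \<delta> \<longleftrightarrow>
     (\<forall>a\<in>R. \<forall>b\<in>R. \<forall>\<beta>. a * b = 0 \<longrightarrow> a * comp_pow \<delta> n \<beta> b = 0)"

definition SA1 :: "'a::ring_1 set \<Rightarrow> nat \<Rightarrow> (nat \<Rightarrow> 'a) \<Rightarrow> bool" where
  "SA1 R n x \<longleftrightarrow>
     (\<forall>S a T b. finite S \<and> S \<subseteq> exps n \<and> (\<forall>\<alpha>\<in>S. a \<alpha> \<in> R)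
       \<and> finite T \<and> T \<subseteq> exps n \<and> (\<forall>\<beta>\<in>T. b \<beta> \<in> R)
       \<and> lin_comb x n S a * lin_comb x n T b = 0
       \<longrightarrow> (\<forall>\<alpha>\<in>S. \<forall>\<beta>\<in>T. a \<alpha> * b \<beta> = 0))"

definition abelian_ring :: "'a::ring_1 set \<Rightarrow> bool" where
  "abelian_ring R \<longleftrightarrow> (\<forall>e\<in>R. e * e = e \<longrightarrow> (\<forall>r\<in>R. e * r = r * e))"

definition nil_set :: "'a::ring_1 set \<Rightarrow> 'a set" where
  "nil_set R = {a\<in>R. \<exists>k. a ^ k = 0}"

definition two_sided_ideal :: "'a::ring_1 set \<Rightarrow> 'a set \<Rightarrow> bool" where
  "two_sided_ideal R I \<longleftrightarrow> I \<subseteq> R \<and> 0 \<in> I \<and> (\<forall>a\<in>I. \<forall>b\<in>I. a + b \<in> I \<and> - a \<in> I)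
     \<and> (\<forall>a\<in>I. \<forall>r\<in>R. r * a \<in> I \<and> a * r \<in> I)"

definition nil_ideal :: "'a::ring_1 set \<Rightarrow> 'a set \<Rightarrow> bool" where
  "nil_ideal R I \<longleftrightarrow> two_sided_ideal R I \<and> I \<subseteq> nil_set R"

definition upper_nilradical :: "'a::ring_1 set \<Rightarrow> 'a set" where
  "upper_nilradical R = {a. \<exists>xs. (\<forall>y\<in>set xs. \<exists>I. nil_ideal R I \<and> y \<in> I) \<and> a = sum_list xs}"

definition NI_ring :: "'a::ring_1 set \<Rightarrow> bool" where
  "NI_ring R \<longleftrightarrow> upper_nilradical R = nil_set R"

definition rann :: "'a::ring_1 set \<Rightarrow> 'a set \<Rightarrow> 'a set" where
  "rann T S = {a\<in>T. \<forall>s\<in>S. s * a = 0}"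

definition lann :: "'a::ring_1 set \<Rightarrow> 'a set \<Rightarrow> 'a set" where
  "lann T S = {a\<in>T. \<forall>s\<in>S. a * s = 0}"

definition right_pp :: "'a::ring_1 set \<Rightarrow> bool" where
  "right_pp R \<longleftrightarrow> (\<forall>a\<in>R. \<exists>e\<in>R. e * e = e \<and> rann R {a} = {e * r | r. r \<in> R})"

definition left_pp :: "'a::ring_1 set \<Rightarrow> bool" where
  "left_pp R \<longleftrightarrow> (\<forall>a\<in>R. \<exists>e\<in>R. e * e = e \<and> lann R {a} = {r * e | r. r \<in> R})"

definition right_ideal_gen :: "'a::ring_1 set \<Rightarrow> 'a set" where
  "right_ideal_gen F = {\<Sum>f\<in>F. f * g f | g. True}"

definition left_ideal_gen :: "'a::ring_1 set \<Rightarrow> 'a set" where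
  "left_ideal_gen F = {\<Sum>f\<in>F. g f * f | g. True}"

definition ac_right :: "'a::ring_1 itself \<Rightarrow> bool" where
  "ac_right _ \<longleftrightarrow> (\<forall>F::'a set. finite F \<longrightarrow>
      (\<exists>c. rann UNIV (right_ideal_gen F) = rann UNIV {c * t | t. True}))"

definition ac_left :: "'a::ring_1 itself \<Rightarrow> bool" where
  "ac_left _ \<longleftrightarrow> (\<forall>F::'a set. finite F \<longrightarrow>
      (\<exists>c. lann UNIV (left_ideal_gen F) = lann UNIV {t * c | t. True}))"

end

(* Idempotents e of R commute with every variable x_i: by compatibility, (1 - e) e = 0 forces
   (1 - e) sigma_i(e) = (1 - e) delta_i(e) = 0, hence (1 - e) x_i e = 0, and symmetrically
   e x_i (1 - e) = 0. Since R is Abelian, such e are central in A. In an Abelian right p.p.-ring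
   the right annihilator in R of a finite set C is e R for a central idempotent e (the product of
   the idempotents for the single elements). Taking for C the coefficients of the elements of a
   finite F in A, condition (SA1) says that F u = 0 iff all coefficients of u lie in e R, i.e.
   iff e u = u. Thus r_A(F A) = r_A((1 - e) A); the left case is symmetric. *)

theory Submission
  imports Defs
begin

section \<open>Central idempotents and annihilators in p.p.-rings\<close>

definition central_idempotent :: "'a::ring_1 set \<Rightarrow> 'a \<Rightarrow> bool" where
  "central_idempotent R e \<longleftrightarrow> e \<in> R \<and> e * e = e \<and> (\<forall>r\<in>R. e * r = r * e)"

lemma idempotent_mult_fixed_iff:
  fixes e f b :: "'a::ring_1"
  assumes "e * e = e" "f * f = f" "f * e = e * f"
  shows "f * e * b = b \<longleftrightarrow> f * b = b \<and> e * b = b"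
proof
  assume fixed: "f * e * b = b"
  have "f * b = (f * f) * e * b" by (metis fixed mult.assoc)
  also have "\<dots> = b" using assms(2) fixed by simp
  finally have "f * b = b" .
  moreover have "e * b = f * (e * e) * b" by (metis fixed assms(3) mult.assoc)
  then have "e * b = b" using assms(1) fixed by simp
  ultimately show "f * b = b \<and> e * b = b" ..
qed (simp add: mult.assoc)

lemma central_idempotent_mult:
  assumes "subring_of R" "central_idempotent R e" "central_idempotent R f"
  shows "central_idempotent R (f * e)"
proof -
  have e: "e \<in> R" "e * e = e" "\<And>r. r \<in> R \<Longrightarrow> e * r = r * e"
    and f: "f \<in> R" "f * f = f" "\<And>r. r \<in> R \<Longrightarrow> f * r = r * f"
    using assms(2,3) unfolding central_idempotent_def by blast+
  have "f * e \<in> R" using assms(1) e(1) f(1) unfolding subring_of_def by blast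
  moreover have "f * e * (f * e) = f * e" by (metis e(2,3) f(1,2) mult.assoc)
  moreover have "f * e * r = r * (f * e)" if "r \<in> R" for r by (metis e(3) f(3) that mult.assoc)
  ultimately show ?thesis unfolding central_idempotent_def by blast
qed

lemma finite_annihilator_central_idempotent:
  assumes "subring_of R" "finite C"
    and "\<And>a. a \<in> C \<Longrightarrow> \<exists>f. central_idempotent R f \<and> (\<forall>b\<in>R. P a b \<longleftrightarrow> f * b = b)"
  shows "\<exists>e. central_idempotent R e \<and> (\<forall>b\<in>R. (\<forall>a\<in>C. P a b) \<longleftrightarrow> e * b = b)"
  using assms(2,3)
proof (induction C rule: finite_induct)
  case empty
  have "central_idempotent R 1" using assms(1) by (simp add: central_idempotent_def subring_of_def)
  then show ?case by auto
next
  case (insert a C)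
  obtain e where e: "central_idempotent R e" and e_fix: "\<forall>b\<in>R. (\<forall>a\<in>C. P a b) \<longleftrightarrow> e * b = b"
    using insert.IH insert.prems by blast
  obtain f where f: "central_idempotent R f" and f_fix: "\<forall>b\<in>R. P a b \<longleftrightarrow> f * b = b"
    using insert.prems by blast
  have "e * e = e" "f * f = f" "f * e = e * f"
    using e f unfolding central_idempotent_def by metis+
  then have "f * e * b = b \<longleftrightarrow> f * b = b \<and> e * b = b" for b
    by (rule idempotent_mult_fixed_iff)
  then show ?case
    using central_idempotent_mult[OF assms(1) e f] e_fix f_fix by auto
qed

lemma right_pp_annihilator:
  assumes "abelian_ring R" "right_pp R" "a \<in> R"
  shows "\<exists>f. central_idempotent R f \<and> (\<forall>b\<in>R. a * b = 0 \<longleftrightarrow> f * b = b)"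
proof -
  obtain f where f: "f \<in> R" "f * f = f" and ann: "rann R {a} = {f * r | r. r \<in> R}"
    using assms(2,3) unfolding right_pp_def by blast
  have "a * b = 0 \<longleftrightarrow> f * b = b" if "b \<in> R" for b
  proof -
    have "a * b = 0 \<longleftrightarrow> (\<exists>r\<in>R. b = f * r)"
      using ann that unfolding rann_def by blast
    also have "\<dots> \<longleftrightarrow> f * b = b"
      using that f(2) by (metis mult.assoc)
    finally show ?thesis .
  qed
  moreover have "central_idempotent R f"
    using assms(1) f unfolding abelian_ring_def central_idempotent_def by blast
  ultimately show ?thesis by blast
qed

lemma left_pp_annihilator:
  assumes "abelian_ring R" "left_pp R" "a \<in> R"
  shows "\<exists>f. central_idempotent R f \<and> (\<forall>b\<in>R. b * a = 0 \<longleftrightarrow> f * b = b)"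
proof -
  obtain f where f: "f \<in> R" "f * f = f" and ann: "lann R {a} = {r * f | r. r \<in> R}"
    using assms(2,3) unfolding left_pp_def by blast
  have central: "central_idempotent R f"
    using assms(1) f unfolding abelian_ring_def central_idempotent_def by blast
  have "b * a = 0 \<longleftrightarrow> f * b = b" if "b \<in> R" for b
  proof -
    have "b * a = 0 \<longleftrightarrow> (\<exists>r\<in>R. b = r * f)"
      using ann that unfolding lann_def by blast
    also have "\<dots> \<longleftrightarrow> b * f = b"
      using that f(2) by (metis mult.assoc)
    also have "\<dots> \<longleftrightarrow> f * b = b"
      using central that unfolding central_idempotent_def by metis
    finally show ?thesis .
  qed
  with central show ?thesis by blast
qed

lemma right_pp_finite_annihilator:
  assumes "subring_of R" "abelian_ring R" "right_pp R" "finite C" "C \<subseteq> R"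
  obtains e where "central_idempotent R e" "\<And>b. b \<in> R \<Longrightarrow> (\<forall>a\<in>C. a * b = 0) \<longleftrightarrow> e * b = b"
proof -
  have "\<exists>f. central_idempotent R f \<and> (\<forall>b\<in>R. a * b = 0 \<longleftrightarrow> f * b = b)" if "a \<in> C" for a
    using right_pp_annihilator assms(2,3,5) that by blast
  from finite_annihilator_central_idempotent[of R C "\<lambda>a b. a * b = 0", OF assms(1,4) this]
  show ?thesis using that by blast
qed

lemma left_pp_finite_annihilator:
  assumes "subring_of R" "abelian_ring R" "left_pp R" "finite C" "C \<subseteq> R"
  obtains e where "central_idempotent R e" "\<And>b. b \<in> R \<Longrightarrow> (\<forall>a\<in>C. b * a = 0) \<longleftrightarrow> e * b = b"
proof -
  have "\<exists>f. central_idempotent R f \<and> (\<forall>b\<in>R. b * a = 0 \<longleftrightarrow> f * b = b)" if "a \<in> C" for a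
    using left_pp_annihilator assms(2,3,5) that by blast
  from finite_annihilator_central_idempotent[of R C "\<lambda>a b. b * a = 0", OF assms(1,4) this]
  show ?thesis using that by blast
qed

section \<open>Property (a.c.) from idempotent annihilators\<close>

lemma rann_right_ideal_gen:
  fixes F :: "'a::ring_1 set"
  assumes "finite F"
  shows "rann UNIV (right_ideal_gen F) = {g. \<forall>f\<in>F. \<forall>t. f * (t * g) = 0}"
proof (intro equalityI subsetI)
  fix g assume g: "g \<in> rann UNIV (right_ideal_gen F)"
  have "f * (t * g) = 0" if "f \<in> F" for f t
  proof -
    have "f * t = (\<Sum>f'\<in>F. f' * (if f' = f then t else 0))"
      using assms that by (simp add: if_distrib cong: if_cong)
    then have "f * t \<in> right_ideal_gen F"
      unfolding right_ideal_gen_def mem_Collect_eq by (intro exI[of _ "\<lambda>f'. if f' = f then t else 0"]) simp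
    then show ?thesis using g unfolding rann_def by (simp flip: mult.assoc)
  qed
  then show "g \<in> {g. \<forall>f\<in>F. \<forall>t. f * (t * g) = 0}" by blast
next
  fix g assume "g \<in> {g. \<forall>f\<in>F. \<forall>t. f * (t * g) = 0}"
  then show "g \<in> rann UNIV (right_ideal_gen F)"
    unfolding rann_def right_ideal_gen_def by (auto simp: sum_distrib_right mult.assoc)
qed

lemma lann_left_ideal_gen:
  fixes F :: "'a::ring_1 set"
  assumes "finite F"
  shows "lann UNIV (left_ideal_gen F) = {g. \<forall>f\<in>F. \<forall>t. g * t * f = 0}"
proof (intro equalityI subsetI)
  fix g assume g: "g \<in> lann UNIV (left_ideal_gen F)"
  have "g * t * f = 0" if "f \<in> F" for f t
  proof -
    have "(\<Sum>f'\<in>F. (if f' = f then t else 0) * f') = (\<Sum>f'\<in>F. if f' = f then t * f' else 0)"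
      by (rule sum.cong) auto
    then have "t * f = (\<Sum>f'\<in>F. (if f' = f then t else 0) * f')"
      using assms that by simp
    then have "t * f \<in> left_ideal_gen F"
      unfolding left_ideal_gen_def mem_Collect_eq by (intro exI[of _ "\<lambda>f'. if f' = f then t else 0"]) simp
    then show ?thesis using g unfolding lann_def by (simp add: mult.assoc)
  qed
  then show "g \<in> {g. \<forall>f\<in>F. \<forall>t. g * t * f = 0}" by blast
next
  fix g assume "g \<in> {g. \<forall>f\<in>F. \<forall>t. g * t * f = 0}"
  then show "g \<in> lann UNIV (left_ideal_gen F)"
    unfolding lann_def left_ideal_gen_def by (auto simp: sum_distrib_left mult.assoc)
qed

lemma ac_rightI:
  assumes "\<And>F::'a::ring_1 set. finite F \<Longrightarrow> \<exists>e. \<forall>u. (\<forall>f\<in>F. f * u = 0) \<longleftrightarrow> e * u = u"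
  shows "ac_right TYPE('a)"
  unfolding ac_right_def
proof (intro allI impI)
  fix F :: "'a set" assume "finite F"
  then obtain e where e: "\<And>u. (\<forall>f\<in>F. f * u = 0) \<longleftrightarrow> e * u = u" using assms by blast
  have "rann UNIV (right_ideal_gen F) = {g. \<forall>t. e * (t * g) = t * g}"
    using rann_right_ideal_gen[OF \<open>finite F\<close>] e by blast
  also have "\<dots> = {g. \<forall>t. (1 - e) * t * g = 0}"
    by (auto simp: left_diff_distrib mult.assoc)
  also have "\<dots> = rann UNIV {(1 - e) * t | t. True}"
    by (auto simp: rann_def)
  finally show "\<exists>c. rann UNIV (right_ideal_gen F) = rann UNIV {c * t | t. True}" by blast
qed

lemma ac_leftI:
  assumes "\<And>F::'a::ring_1 set. finite F \<Longrightarrow> \<exists>e. \<forall>u. (\<forall>f\<in>F. u * f = 0) \<longleftrightarrow> u * e = u"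
  shows "ac_left TYPE('a)"
  unfolding ac_left_def
proof (intro allI impI)
  fix F :: "'a set" assume "finite F"
  then obtain e where e: "\<And>u. (\<forall>f\<in>F. u * f = 0) \<longleftrightarrow> u * e = u" using assms by blast
  have "lann UNIV (left_ideal_gen F) = {g. \<forall>t. g * t * e = g * t}"
    using lann_left_ideal_gen[OF \<open>finite F\<close>] e by blast
  also have "\<dots> = {g. \<forall>t. g * (t * (1 - e)) = 0}"
    by (auto simp: right_diff_distrib mult.assoc)
  also have "\<dots> = lann UNIV {t * (1 - e) | t. True}"
    by (auto simp: lann_def)
  finally show "\<exists>c. lann UNIV (left_ideal_gen F) = lann UNIV {t * c | t. True}" by blast
qed

section \<open>Idempotents of R are central in a compatible skew PBW extension\<close>

lemma comp_pow_single:
  "comp_pow f k (\<lambda>j. if j = i then 1 else 0) = (if i < k then f i else id)"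
  by (induction k) (auto simp: less_Suc_eq)

lemma Sigma_compatibleD:
  assumes "Sigma_compatible R n \<sigma>" "i < n" "a \<in> R" "b \<in> R" "a * b = 0"
  shows "a * \<sigma> i b = 0"
  using assms comp_pow_single[of \<sigma> n i] unfolding Sigma_compatible_def by metis

lemma Delta_compatibleD:
  assumes "Delta_compatible R n \<delta>" "i < n" "a \<in> R" "b \<in> R" "a * b = 0"
  shows "a * \<delta> i b = 0"
  using assms comp_pow_single[of \<delta> n i] unfolding Delta_compatible_def by metis

lemma PBW_var_commute_idempotent:
  assumes maps: "PBW_maps R n x \<sigma> \<delta>" and sc: "Sigma_compatible R n \<sigma>"
    and dc: "Delta_compatible R n \<delta>" and "subring_of R"
    and e: "e \<in> R" "e * e = e" and i: "i < n"
  shows "x i * e = e * x i"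
proof -
  have e': "1 - e \<in> R"
    using \<open>subring_of R\<close> e(1) unfolding subring_of_def by (metis diff_conv_add_uminus)
  have "(1 - e) * e = 0" "e * (1 - e) = 0" using e(2) by (simp_all add: algebra_simps)
  then have "(1 - e) * \<sigma> i e = 0" "(1 - e) * \<delta> i e = 0"
    and "e * \<sigma> i (1 - e) = 0" "e * \<delta> i (1 - e) = 0"
    using Sigma_compatibleD[OF sc i] Delta_compatibleD[OF dc i] e(1) e' by blast+
  moreover have "x i * e = \<sigma> i e * x i + \<delta> i e"
    and "x i * (1 - e) = \<sigma> i (1 - e) * x i + \<delta> i (1 - e)"
    using maps e(1) e' i unfolding PBW_maps_def by blast+
  ultimately have "(1 - e) * (x i * e) = 0" "e * (x i * (1 - e)) = 0"
    by (simp_all add: distrib_left mult.assoc flip: mult.assoc)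
  moreover have "(1 - e) * (x i * e) = x i * e - e * x i * e"
    and "e * (x i * (1 - e)) = e * x i - e * x i * e"
    by (simp_all add: left_diff_distrib right_diff_distrib mult.assoc)
  ultimately show ?thesis by simp
qed

lemma std_mono_commute:
  assumes "\<And>i. i < n \<Longrightarrow> x i * e = e * x i" "k \<le> n"
  shows "std_mono x k \<alpha> * e = e * std_mono x k \<alpha>"
  using assms(2)
proof (induction k)
  case (Suc k)
  have "x k ^ \<alpha> k * e = e * x k ^ \<alpha> k"
    using Suc.prems assms(1) by (simp add: power_commuting_commutes)
  with Suc show ?case by (simp add: mult.assoc) (metis mult.assoc)
qed simp

lemma lin_comb_zero [simp]: "lin_comb x n S (\<lambda>_. 0) = 0"
  by (simp add: lin_comb_def)

lemma mult_lin_comb_left_coeffwise: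
  "(\<And>\<alpha>. \<alpha> \<in> S \<Longrightarrow> e * a \<alpha> = b \<alpha>) \<Longrightarrow> e * lin_comb x n S a = lin_comb x n S b"
  unfolding lin_comb_def sum_distrib_left by (rule sum.cong) (simp_all flip: mult.assoc)

definition PBW_rep :: "'a::ring_1 set \<Rightarrow> nat \<Rightarrow> (nat \<Rightarrow> 'a) \<Rightarrow> 'a \<Rightarrow> (nat \<Rightarrow> nat) set
    \<Rightarrow> ((nat \<Rightarrow> nat) \<Rightarrow> 'a) \<Rightarrow> bool" where
  "PBW_rep R n x f S c \<longleftrightarrow> finite S \<and> S \<subseteq> exps n \<and> (\<forall>\<alpha>\<in>S. c \<alpha> \<in> R) \<and> f = lin_comb x n S c"

lemma PBW_rep_finite: "PBW_rep R n x f S c \<Longrightarrow> finite S"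
  unfolding PBW_rep_def by blast

lemma PBW_rep_coeff: "PBW_rep R n x f S c \<Longrightarrow> \<alpha> \<in> S \<Longrightarrow> c \<alpha> \<in> R"
  unfolding PBW_rep_def by blast

lemma PBW_rep_eq: "PBW_rep R n x f S c \<Longrightarrow> f = lin_comb x n S c"
  unfolding PBW_rep_def by blast

lemma PBW_rep_mult_left_zero:
  assumes "PBW_rep R n x f S c" "\<And>\<alpha>. \<alpha> \<in> S \<Longrightarrow> e * c \<alpha> = 0"
  shows "e * f = 0"
proof -
  have "e * lin_comb x n S c = lin_comb x n S (\<lambda>_. 0)"
    using assms(2) by (rule mult_lin_comb_left_coeffwise)
  then show ?thesis by (simp flip: PBW_rep_eq[OF assms(1)])
qed

lemma PBW_rep_mult_left_fixed:
  assumes "PBW_rep R n x f S c" "\<And>\<alpha>. \<alpha> \<in> S \<Longrightarrow> e * c \<alpha> = c \<alpha>"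
  shows "e * f = f"
proof -
  have "e * lin_comb x n S c = lin_comb x n S c"
    using assms(2) by (rule mult_lin_comb_left_coeffwise)
  then show ?thesis by (simp flip: PBW_rep_eq[OF assms(1)])
qed

lemma skew_PBW_subring: "skew_PBW R n x \<Longrightarrow> subring_of R"
  unfolding skew_PBW_def by simp

lemma skew_PBW_rep: "skew_PBW R n x \<Longrightarrow> \<exists>S c. PBW_rep R n x f S c"
  unfolding skew_PBW_def PBW_rep_def by (elim conjE allE) assumption

lemma skew_PBW_reps:
  assumes "skew_PBW R n x"
  obtains S c where "\<And>f. PBW_rep R n x f (S f) (c f)"
  using skew_PBW_rep[OF assms] by metis

lemma SA1D:
  assumes "SA1 R n x" "PBW_rep R n x f S a" "PBW_rep R n x g T b" "f * g = 0" "\<alpha> \<in> S" "\<beta> \<in> T"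
  shows "a \<alpha> * b \<beta> = 0"
  using assms unfolding SA1_def PBW_rep_def by blast

lemma PBW_idempotent_central:
  assumes "skew_PBW R n x" "PBW_maps R n x \<sigma> \<delta>"
    and "Sigma_compatible R n \<sigma>" "Delta_compatible R n \<delta>" "abelian_ring R"
    and e: "e \<in> R" "e * e = e"
  shows "e * f = f * e"
proof -
  have sub: "subring_of R" using assms(1) by (rule skew_PBW_subring)
  obtain S c where rep: "PBW_rep R n x f S c"
    using skew_PBW_rep[OF assms(1)] by blast
  have mono: "std_mono x n \<alpha> * e = e * std_mono x n \<alpha>" for \<alpha>
    using std_mono_commute PBW_var_commute_idempotent[OF assms(2-4) sub e] by blast
  have termwise: "e * (c \<alpha> * std_mono x n \<alpha>) = c \<alpha> * std_mono x n \<alpha> * e" if "\<alpha> \<in> S" for \<alpha>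
  proof -
    have "e * c \<alpha> = c \<alpha> * e"
      using assms(5) e PBW_rep_coeff[OF rep that] unfolding abelian_ring_def by blast
    then show ?thesis by (metis mono mult.assoc)
  qed
  have f: "f = (\<Sum>\<alpha>\<in>S. c \<alpha> * std_mono x n \<alpha>)"
    using PBW_rep_eq[OF rep] unfolding lin_comb_def .
  have "e * f = (\<Sum>\<alpha>\<in>S. e * (c \<alpha> * std_mono x n \<alpha>))"
    unfolding f by (rule sum_distrib_left)
  also have "\<dots> = (\<Sum>\<alpha>\<in>S. c \<alpha> * std_mono x n \<alpha> * e)"
    using termwise by (rule sum.cong[OF refl])
  also have "\<dots> = f * e"
    unfolding f by (rule sum_distrib_right[symmetric])
  finally show ?thesis .
qed

section \<open>Annihilators of finite subsets of the extension\<close>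

lemma PBW_right_annihilator_idempotent:
  fixes R F :: "'a::ring_1 set"
  assumes PBW: "skew_PBW R n x" "PBW_maps R n x \<sigma> \<delta>"
    and compat: "Sigma_compatible R n \<sigma>" "Delta_compatible R n \<delta>"
    and "abelian_ring R" "SA1 R n x" "right_pp R" "finite F"
  shows "\<exists>e. \<forall>u. (\<forall>f\<in>F. f * u = 0) \<longleftrightarrow> e * u = u"
proof -
  obtain S c where rep: "\<And>f. PBW_rep R n x f (S f) (c f)"
    using skew_PBW_reps[OF PBW(1)] by blast
  define C where "C = (\<Union>f\<in>F. c f ` S f)"
  have "finite C" "C \<subseteq> R"
    using PBW_rep_finite[OF rep] PBW_rep_coeff[OF rep] \<open>finite F\<close> unfolding C_def by auto
  then obtain e where e: "central_idempotent R e"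
    and ann: "\<And>b. b \<in> R \<Longrightarrow> (\<forall>a\<in>C. a * b = 0) \<longleftrightarrow> e * b = b"
    using right_pp_finite_annihilator[OF skew_PBW_subring[OF PBW(1)] \<open>abelian_ring R\<close> \<open>right_pp R\<close>]
    by blast
  have "e \<in> R" "e * e = e" using e unfolding central_idempotent_def by blast+
  note central = PBW_idempotent_central[OF PBW compat \<open>abelian_ring R\<close> this]
  have annihilated: "f * e = 0" if "f \<in> F" for f
  proof -
    have "e * c f \<alpha> = 0" if "\<alpha> \<in> S f" for \<alpha>
    proof -
      have "c f \<alpha> * e = 0" using ann[OF \<open>e \<in> R\<close>] \<open>e * e = e\<close> \<open>f \<in> F\<close> that unfolding C_def by blast
      then show ?thesis using e PBW_rep_coeff[OF rep that] unfolding central_idempotent_def by simp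
    qed
    then have "e * f = 0" by (rule PBW_rep_mult_left_zero[OF rep])
    then show ?thesis using central[of f] by simp
  qed
  have fixed: "e * u = u" if u: "\<forall>f\<in>F. f * u = 0" for u
  proof (rule PBW_rep_mult_left_fixed[OF rep])
    fix \<beta> assume "\<beta> \<in> S u"
    then show "e * c u \<beta> = c u \<beta>"
      using ann[OF PBW_rep_coeff[OF rep]] SA1D[OF \<open>SA1 R n x\<close> rep rep] u unfolding C_def by blast
  qed
  have "(\<forall>f\<in>F. f * u = 0) \<longleftrightarrow> e * u = u" for u
  proof
    assume "e * u = u"
    then show "\<forall>f\<in>F. f * u = 0" using annihilated by (metis mult.assoc mult_zero_left)
  qed (rule fixed)
  then show ?thesis by blast
qed

lemma PBW_left_annihilator_idempotent:
  fixes R F :: "'a::ring_1 set"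
  assumes PBW: "skew_PBW R n x" "PBW_maps R n x \<sigma> \<delta>"
    and compat: "Sigma_compatible R n \<sigma>" "Delta_compatible R n \<delta>"
    and "abelian_ring R" "SA1 R n x" "left_pp R" "finite F"
  shows "\<exists>e. \<forall>u. (\<forall>f\<in>F. u * f = 0) \<longleftrightarrow> u * e = u"
proof -
  obtain S c where rep: "\<And>f. PBW_rep R n x f (S f) (c f)"
    using skew_PBW_reps[OF PBW(1)] by blast
  define C where "C = (\<Union>f\<in>F. c f ` S f)"
  have "finite C" "C \<subseteq> R"
    using PBW_rep_finite[OF rep] PBW_rep_coeff[OF rep] \<open>finite F\<close> unfolding C_def by auto
  then obtain e where e: "central_idempotent R e"
    and ann: "\<And>b. b \<in> R \<Longrightarrow> (\<forall>a\<in>C. b * a = 0) \<longleftrightarrow> e * b = b"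
    using left_pp_finite_annihilator[OF skew_PBW_subring[OF PBW(1)] \<open>abelian_ring R\<close> \<open>left_pp R\<close>]
    by blast
  have "e \<in> R" "e * e = e" using e unfolding central_idempotent_def by blast+
  note central = PBW_idempotent_central[OF PBW compat \<open>abelian_ring R\<close> this]
  have annihilated: "e * f = 0" if "f \<in> F" for f
  proof (rule PBW_rep_mult_left_zero[OF rep])
    fix \<alpha> assume "\<alpha> \<in> S f"
    then show "e * c f \<alpha> = 0"
      using ann[OF \<open>e \<in> R\<close>] \<open>e * e = e\<close> \<open>f \<in> F\<close> unfolding C_def by blast
  qed
  have fixed: "u * e = u" if u: "\<forall>f\<in>F. u * f = 0" for u
  proof -
    have "e * c u \<beta> = c u \<beta>" if "\<beta> \<in> S u" for \<beta>
      using ann[OF PBW_rep_coeff[OF rep that]] SA1D[OF \<open>SA1 R n x\<close> rep rep] u that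
      unfolding C_def by blast
    then have "e * u = u" by (rule PBW_rep_mult_left_fixed[OF rep])
    then show ?thesis using central[of u] by simp
  qed
  have "(\<forall>f\<in>F. u * f = 0) \<longleftrightarrow> u * e = u" for u
  proof
    assume "u * e = u"
    then show "\<forall>f\<in>F. u * f = 0" using annihilated by (metis mult.assoc mult_zero_right)
  qed (rule fixed)
  then show ?thesis by blast
qed

theorem mainTheorem2:
  fixes R :: "'a::ring_1 set" and n :: nat and x :: "nat \<Rightarrow> 'a"
    and \<sigma> \<delta> :: "nat \<Rightarrow> 'a \<Rightarrow> 'a"
  assumes "skew_PBW R n x"
    and "PBW_maps R n x \<sigma> \<delta>"
    and "Sigma_compatible R n \<sigma>" and "Delta_compatible R n \<delta>"
    and "abelian_ring R" and "NI_ring R" and "SA1 R n x"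
  shows "(right_pp R \<longrightarrow> ac_right TYPE('a)) \<and> (left_pp R \<longrightarrow> ac_left TYPE('a))"
proof (intro conjI impI)
  assume "right_pp R"
  then show "ac_right TYPE('a)"
    by (intro ac_rightI PBW_right_annihilator_idempotent[OF assms(1-5,7)])
next
  assume "left_pp R"
  then show "ac_left TYPE('a)"
    by (intro ac_leftI PBW_left_annihilator_idempotent[OF assms(1-5,7)])
qed

end
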